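(* Let $\Theta=(\theta_k)_{k\ge1}$ be a sequence of positive real numbers such that the series $g(z)=\sum_{k\ge1}\frac{\theta_k}{k}z^k$ has radius of convergence $r\in(0,\infty)$, i.e. $\frac1r=\limsup_k\theta_k^{1/k}$. Let $(Y_\ell)_{\ell\ge1}$ be independent Poisson random variables, $Y_\ell$ with parameter $\frac{r^\ell\theta_\ell}{\ell}$, let $X_k=\sum_{\ell\mid k}\ell Y_\ell$ and $f(z)=\sum_{k\ge1}\frac{X_k}{k}z^k$. Then almost surely the radius of convergence of the power series $f$ is greater than or equal to $1$. *)

theory Defs
  imports "HOL-Analysis.Analysis" "HOL-Probability.Probability"
begin

end

theory Submission
  imports Defs
begin

text \<open>For \<open>0 \<le> \<rho> < 1\<close> the expectation of \<open>\<Sum>\<^sub>l Y\<^sub>l \<rho>\<^sup>l\<close> is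
  \<open>\<Sum>\<^sub>l \<theta>\<^sub>l (r\<rho>)\<^sup>l / l = g(r\<rho>) < \<infinity>\<close>, so almost surely \<open>\<Sum>\<^sub>l Y\<^sub>l \<rho>\<^sup>l < \<infinity>\<close>,
  simultaneously for a sequence \<open>\<rho> \<rightarrow> 1\<close>. For such an outcome the \<open>k\<close>-th coefficient of \<open>f\<close>
  satisfies \<open>(X\<^sub>k / k) \<rho>\<^sup>k = \<Sum>\<^bsub>l dvd k\<^esub> (l/k) Y\<^sub>l \<rho>\<^sup>k \<le> \<Sum>\<^sub>l Y\<^sub>l \<rho>\<^sup>l\<close>, a bound
  independent of \<open>k\<close>, hence the radius of convergence of \<open>f\<close> is at least \<open>\<rho>\<close>.\<close>

lemma nn_integral_poisson_pmf:
  fixes c :: real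
  assumes "0 < c"
  shows "(\<integral>\<^sup>+x. ennreal (real x) \<partial>measure_pmf (poisson_pmf c)) = ennreal c"
proof -
  define f where "f = (\<lambda>x::nat. real x * (c ^ x / fact x * exp (-c)))"
  have "(\<lambda>j. (c * exp (-c)) * (c ^ j /\<^sub>R fact j)) sums ((c * exp (-c)) * exp c)"
    by (intro sums_mult exp_converges)
  also have "(c * exp (-c)) * exp c = c"
    by (simp add: exp_minus field_simps)
  finally have "(\<lambda>j. f (Suc j)) sums c"
    by (rule sums_cong[THEN iffD1, rotated]) (simp add: f_def fact_Suc field_simps del: of_nat_Suc)
  then have "f sums c"
    using sums_Suc_iff[of f c] by (simp add: f_def)
  have "(\<integral>\<^sup>+x. ennreal (real x) \<partial>measure_pmf (poisson_pmf c))
      = (\<integral>\<^sup>+x. ennreal (f x) \<partial>count_space UNIV)"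
    unfolding nn_integral_measure_pmf using assms
    by (intro nn_integral_cong) (simp add: f_def ennreal_mult'[symmetric] mult.commute)
  also have "\<dots> = (\<Sum>x. ennreal (f x))"
    by (rule nn_integral_count_space_nat)
  also have "\<dots> = ennreal c"
    using \<open>f sums c\<close> assms by (intro suminf_ennreal_eq) (auto simp: f_def)
  finally show ?thesis .
qed

lemma AE_summable_if_suminf_nn_integral_finite:
  fixes f :: "nat \<Rightarrow> 'a \<Rightarrow> real"
  assumes "\<And>l. f l \<in> borel_measurable M" and "\<And>l x. 0 \<le> f l x"
    and "(\<Sum>l. \<integral>\<^sup>+x. ennreal (f l x) \<partial>M) \<noteq> \<infinity>"
  shows "AE x in M. summable (\<lambda>l. f l x)"
proof -
  have "(\<integral>\<^sup>+x. (\<Sum>l. ennreal (f l x)) \<partial>M) \<noteq> \<infinity>"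
    using assms by (subst nn_integral_suminf) auto
  then have "AE x in M. (\<Sum>l. ennreal (f l x)) \<noteq> \<infinity>"
    by (intro nn_integral_noteq_infinite) (use assms(1) in measurable)
  then show ?thesis
    by (rule eventually_mono) (auto intro: summable_suminf_not_top assms(2) simp: infinity_ennreal_def)
qed

lemma AE_summable_poisson_power_series:
  fixes Y :: "nat \<Rightarrow> 'a \<Rightarrow> nat" and \<mu> :: "nat \<Rightarrow> real" and \<rho> :: real
  assumes meas: "\<And>l. l \<ge> 1 \<Longrightarrow> Y l \<in> M \<rightarrow>\<^sub>M count_space UNIV"
    and poisson: "\<And>l. l \<ge> 1 \<Longrightarrow>
       distr M (count_space UNIV) (Y l) = measure_pmf (poisson_pmf (\<mu> l))"
    and rate_pos: "\<And>l. l \<ge> 1 \<Longrightarrow> 0 < \<mu> l"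
    and "0 \<le> \<rho>" and "summable (\<lambda>l. \<mu> l * \<rho> ^ l)"
  shows "AE \<omega> in M. summable (\<lambda>l. real (Y l \<omega>) * \<rho> ^ l)"
proof -
  have expectation: "(\<integral>\<^sup>+\<omega>. ennreal (real (Y l \<omega>) * \<rho> ^ l) \<partial>M) = ennreal (\<mu> l * \<rho> ^ l)"
    if "l \<ge> 1" for l
  proof -
    have "(\<integral>\<^sup>+\<omega>. ennreal (real (Y l \<omega>) * \<rho> ^ l) \<partial>M)
        = (\<integral>\<^sup>+x. ennreal (real x * \<rho> ^ l) \<partial>distr M (count_space UNIV) (Y l))"
      using meas[OF that] by (simp add: nn_integral_distr)
    also have "\<dots> = (\<integral>\<^sup>+x. ennreal (\<rho> ^ l) * ennreal (real x) \<partial>measure_pmf (poisson_pmf (\<mu> l)))"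
      unfolding poisson[OF that] using \<open>0 \<le> \<rho>\<close>
      by (intro nn_integral_cong) (simp add: ennreal_mult'[symmetric] mult.commute)
    also have "\<dots> = ennreal (\<rho> ^ l) * ennreal (\<mu> l)"
      by (simp add: nn_integral_cmult nn_integral_poisson_pmf[OF rate_pos[OF that]])
    finally show ?thesis
      using \<open>0 \<le> \<rho>\<close> rate_pos[OF that] by (simp add: ennreal_mult mult.commute)
  qed
  have "(\<Sum>l. \<integral>\<^sup>+\<omega>. ennreal (real (Y (Suc l) \<omega>) * \<rho> ^ Suc l) \<partial>M)
      = (\<Sum>l. ennreal (\<mu> (Suc l) * \<rho> ^ Suc l))"
    by (intro suminf_cong expectation) simp
  also have "\<dots> = ennreal (\<Sum>l. \<mu> (Suc l) * \<rho> ^ Suc l)"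
  proof (rule suminf_ennreal2)
    show "summable (\<lambda>l. \<mu> (Suc l) * \<rho> ^ Suc l)"
      using \<open>summable (\<lambda>l. \<mu> l * \<rho> ^ l)\<close> by (subst summable_Suc_iff)
  qed (use \<open>0 \<le> \<rho>\<close> rate_pos in \<open>auto simp: less_imp_le\<close>)
  finally have "(\<Sum>l. \<integral>\<^sup>+\<omega>. ennreal (real (Y (Suc l) \<omega>) * \<rho> ^ Suc l) \<partial>M) \<noteq> \<infinity>"
    by simp
  then have "AE \<omega> in M. summable (\<lambda>l. real (Y (Suc l) \<omega>) * \<rho> ^ Suc l)"
    using meas \<open>0 \<le> \<rho>\<close> by (intro AE_summable_if_suminf_nn_integral_finite) auto
  then show ?thesis
    by (rule eventually_mono) (subst (asm) summable_Suc_iff)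
qed

lemma conv_radius_ge_if_bounded:
  fixes a :: "nat \<Rightarrow> 'a :: {banach, real_normed_div_algebra}"
  assumes "0 \<le> \<rho>" and bound: "\<And>k. norm (a k) * \<rho> ^ k \<le> B"
  shows "ereal \<rho> \<le> conv_radius a"
proof (rule conv_radius_geI_ex')
  fix s :: real assume "0 < s" "ereal s < ereal \<rho>"
  then have "0 < s" "s < \<rho>" by simp_all
  show "summable (\<lambda>k. a k * of_real s ^ k)"
  proof (rule summable_comparison_test')
    show "summable (\<lambda>k. B * (s / \<rho>) ^ k)"
      using \<open>0 < s\<close> \<open>s < \<rho>\<close> by (intro summable_mult summable_geometric) simp
    fix k
    have "norm (a k * of_real s ^ k) = norm (a k) * \<rho> ^ k * (s / \<rho>) ^ k"
      using \<open>0 < s\<close> \<open>s < \<rho>\<close> by (simp add: norm_mult norm_power power_divide)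
    also have "\<dots> \<le> B * (s / \<rho>) ^ k"
      using \<open>0 < s\<close> \<open>s < \<rho>\<close> by (intro mult_right_mono bound) simp
    finally show "norm (a k * of_real s ^ k) \<le> B * (s / \<rho>) ^ k" .
  qed
qed

lemma summable_rescaled_inside_conv_radius:
  fixes a :: "nat \<Rightarrow> real"
  assumes radius: "conv_radius a = ereal r" and "0 < r" "0 \<le> \<rho>" "\<rho> < 1"
  shows "summable (\<lambda>l. r ^ l * a l * \<rho> ^ l)"
proof -
  have "summable (\<lambda>l. a l * (r * \<rho>) ^ l)"
    using assms(2-4) by (intro summable_in_conv_radius) (simp add: radius)
  then show ?thesis
    by (simp add: power_mult_distrib mult_ac)
qed

lemma divisor_sum_coeff_bound:
  fixes y :: "nat \<Rightarrow> nat" and \<rho> :: real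
  assumes "0 \<le> \<rho>" "\<rho> \<le> 1" and summable: "summable (\<lambda>l. real (y l) * \<rho> ^ l)"
  shows "real (\<Sum>l\<in>{l\<in>{1..k}. l dvd k}. l * y l) / real k * \<rho> ^ k \<le> (\<Sum>l. real (y l) * \<rho> ^ l)"
proof -
  let ?D = "{l\<in>{1..k}. l dvd k}"
  have "real (\<Sum>l\<in>?D. l * y l) / real k * \<rho> ^ k = (\<Sum>l\<in>?D. real l / real k * (real (y l) * \<rho> ^ k))"
    by (simp add: sum_divide_distrib sum_distrib_right mult.assoc)
  also have "\<dots> \<le> (\<Sum>l\<in>?D. real (y l) * \<rho> ^ l)"
  proof (rule sum_mono)
    fix l assume "l \<in> ?D"
    then have "l \<le> k" by simp
    have "real l / real k * (real (y l) * \<rho> ^ k) \<le> 1 * (real (y l) * \<rho> ^ k)"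
      using \<open>l \<le> k\<close> \<open>0 \<le> \<rho>\<close> by (intro mult_right_mono) (auto simp: divide_le_eq_1)
    also have "\<dots> \<le> real (y l) * \<rho> ^ l"
      using \<open>l \<le> k\<close> assms(1,2) by (simp add: mult_left_mono power_decreasing)
    finally show "real l / real k * (real (y l) * \<rho> ^ k) \<le> real (y l) * \<rho> ^ l" .
  qed
  also have "\<dots> \<le> (\<Sum>l. real (y l) * \<rho> ^ l)"
    using summable \<open>0 \<le> \<rho>\<close> by (intro sum_le_suminf) auto
  finally show ?thesis .
qed

lemma conv_radius_divisor_sum_ge:
  fixes y :: "nat \<Rightarrow> nat" and \<rho> :: real
  assumes "0 \<le> \<rho>" "\<rho> \<le> 1" and "summable (\<lambda>l. real (y l) * \<rho> ^ l)"
  shows "ereal \<rho> \<le> conv_radius (\<lambda>k. real (\<Sum>l\<in>{l\<in>{1..k}. l dvd k}. l * y l) / real k)"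
proof (rule conv_radius_ge_if_bounded)
  fix k
  show "norm (real (\<Sum>l\<in>{l\<in>{1..k}. l dvd k}. l * y l) / real k) * \<rho> ^ k \<le> (\<Sum>l. real (y l) * \<rho> ^ l)"
    using divisor_sum_coeff_bound[OF assms] by (simp add: abs_of_nonneg sum_nonneg)
qed fact

lemma conv_radius_divisor_sum_ge_1:
  fixes y :: "nat \<Rightarrow> nat" and \<rho> :: "nat \<Rightarrow> real"
  assumes "\<And>n. 0 \<le> \<rho> n" "\<And>n. \<rho> n \<le> 1" "\<rho> \<longlonglongrightarrow> 1"
    and "\<And>n. summable (\<lambda>l. real (y l) * \<rho> n ^ l)"
  shows "1 \<le> conv_radius (\<lambda>k. real (\<Sum>l\<in>{l\<in>{1..k}. l dvd k}. l * y l) / real k)"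
proof (rule LIMSEQ_le_const2)
  show "(\<lambda>n. ereal (\<rho> n)) \<longlonglongrightarrow> 1"
    using \<open>\<rho> \<longlonglongrightarrow> 1\<close> unfolding one_ereal_def by (rule tendsto_ereal)
  show "\<exists>N. \<forall>n\<ge>N. ereal (\<rho> n) \<le> conv_radius (\<lambda>k. real (\<Sum>l\<in>{l\<in>{1..k}. l dvd k}. l * y l) / real k)"
    using assms(1,2,4) by (blast intro: conv_radius_divisor_sum_ge)
qed

theorem mainTheorem6:
  fixes M :: "'a measure" and \<theta> :: "nat \<Rightarrow> real" and r :: real
    and Y :: "nat \<Rightarrow> 'a \<Rightarrow> nat"
  assumes "prob_space M"
    and \<theta>_pos: "\<And>k. k \<ge> 1 \<Longrightarrow> \<theta> k > 0"
    and r_pos: "0 < r"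
    and radius: "conv_radius (\<lambda>k. \<theta> k / real k) = ereal r"
    and indep: "prob_space.indep_vars M (\<lambda>_. count_space UNIV) Y {1..}"
    and poisson: "\<And>l. l \<ge> 1 \<Longrightarrow>
       distr M (count_space UNIV) (Y l) = measure_pmf (poisson_pmf (r ^ l * \<theta> l / real l))"
  shows "AE \<omega> in M. conv_radius
            (\<lambda>k. real (\<Sum>l\<in>{l\<in>{1..k}. l dvd k}. l * Y l \<omega>) / real k) \<ge> 1"
proof -
  define \<rho> where "\<rho> n = 1 - inverse (real (Suc n))" for n
  have \<rho>_bounds: "0 \<le> \<rho> n" "\<rho> n < 1" for n
    by (auto simp: \<rho>_def field_simps)
  have "\<rho> \<longlonglongrightarrow> 1"
    unfolding \<rho>_def using LIMSEQ_inverse_real_of_nat_add_minus[of 1] by simp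
  have meas: "Y l \<in> M \<rightarrow>\<^sub>M count_space UNIV" if "l \<ge> 1" for l
    using indep that unfolding prob_space.indep_vars_def[OF \<open>prob_space M\<close>] by auto
  have "summable (\<lambda>l. r ^ l * \<theta> l / real l * \<rho> n ^ l)" for n
    using summable_rescaled_inside_conv_radius[OF radius r_pos \<rho>_bounds] by (simp add: times_divide_eq_right)
  then have "AE \<omega> in M. summable (\<lambda>l. real (Y l \<omega>) * \<rho> n ^ l)" for n
    using \<theta>_pos r_pos \<rho>_bounds
    by (intro AE_summable_poisson_power_series[OF meas poisson]) auto
  then have "AE \<omega> in M. \<forall>n. summable (\<lambda>l. real (Y l \<omega>) * \<rho> n ^ l)"
    by (simp add: AE_all_countable)
  then show ?thesis
    by (rule eventually_mono)
      (intro conv_radius_divisor_sum_ge_1[of \<rho>] \<open>\<rho> \<longlonglongrightarrow> 1\<close>, simp_all add: \<rho>_bounds less_imp_le)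
qed

end
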